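(* Let $(\mathcal A,r)$ be a population game, $\mathcal G=(\mathcal H,\boldsymbol\eta,W)$ an undirected connected community network, and $\mathbf f$ an imitation mechanism satisfying Assumption 1. Let $\mathbf x(t)$ be the solution of the network imitation dynamics with initial condition $\mathbf x(0)\in\mathcal X^\bullet$ and $\mathbf y(t)=\mathbf x(t)\mathbf 1$. Then (i) $\mathbf y(t)=\mathbf y(0)$ for all $t\ge0$; (ii) $\mathbf x(t)\in\mathcal X^\bullet$ for all $t\ge 0$.
   Context: Let $\mathcal A$ be a finite set of actions and $\mathcal Y=\{\mathbf y\in\mathbb R_+^{\mathcal A}:\mathbf 1^\top\mathbf y=1\}$. A population game $(\mathcal A,r)$ consists of reward functions $r_i:\mathcal Y\to\mathbb R$. A community network $\mathcal G=(\mathcal H,\boldsymbol\eta,W)$: finite set $\mathcal H$, $\boldsymbol\eta\in\mathbb R^{\mathcal H}$ with $\eta_h>0$, $\sum_h\eta_h=1$, and nonnegative $W\in\mathbb R_+^{\mathcal H\times\mathcal H}$ with positive diagonal; connected means $W$ irreducible, undirected means $W=W^\top$. System states: $\mathcal X=\{\mathbf x\in\mathbb R_+^{\mathcal A\times\mathcal H}:\mathbf 1^\top\mathbf x=\boldsymbol\eta^\top\}$. An imitation mechanism is a Lipschitz map $\mathbf f:\mathcal Y\to\mathbb R_+^{\mathcal A\times\mathcal A}$. Network imitation dynamics: $$\dot x_{ih}=\sum_{j\in\mathcal A}\sum_{k\in\mathcal H}\big(x_{jh}W_{hk}x_{ik}f_{ji}(\mathbf x\mathbf 1)-x_{ih}W_{hk}x_{jk}f_{ij}(\mathbf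 x\mathbf 1)\big).$$ Assumption 1: $\operatorname{sgn}(f_{ij}(\mathbf y)-f_{ji}(\mathbf y))=\operatorname{sgn}(r_j(\mathbf y)-r_i(\mathbf y))$ for all $i,j,\mathbf y$. $\mathcal Y^\bullet=\{\mathbf y\in\mathcal Y: y_i>0,y_j>0\Rightarrow r_i(\mathbf y)=r_j(\mathbf y)\}$, $\mathcal X^\bullet=\{\mathbf x\in\mathcal X:\mathbf x\mathbf 1\in\mathcal Y^\bullet\}$. *)

theory Defs
  imports "HOL-Analysis.Analysis"
begin

text \<open>Actions: finite type 'a; communities: finite type 'h.
  Population states y :: real^'a; system states x :: real^'h^'a with x $ i $ h = x_{ih}.\<close>

definition pop_simplex :: "(real^'a::finite) set" where
  "pop_simplex = {y. (\<forall>i. 0 \<le> y $ i) \<and> (\<Sum>i\<in>UNIV. y $ i) = 1}"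

definition sys_states :: "real^'h::finite \<Rightarrow> (real^'h^'a::finite) set" where
  "sys_states eta = {x. (\<forall>i h. 0 \<le> x $ i $ h) \<and> (\<forall>h. (\<Sum>i\<in>UNIV. x $ i $ h) = eta $ h)}"

definition aggr :: "real^'h::finite^'a::finite \<Rightarrow> real^'a" where
  "aggr x = (\<chi> i. \<Sum>h\<in>UNIV. x $ i $ h)"

definition community_network :: "real^'h::finite \<Rightarrow> real^'h^'h \<Rightarrow> bool" where
  "community_network eta W \<longleftrightarrow>
     (\<forall>h. 0 < eta $ h) \<and> (\<Sum>h\<in>UNIV. eta $ h) = 1 \<and>
     (\<forall>h k. 0 \<le> W $ h $ k) \<and> (\<forall>h. 0 < W $ h $ h)"

definition irreducible_mat :: "real^'h::finite^'h \<Rightarrow> bool" where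
  "irreducible_mat W \<longleftrightarrow> (\<forall>h k. (h, k) \<in> {(a, b). W $ a $ b \<noteq> 0}\<^sup>+)"

definition undirected :: "real^'h::finite^'h \<Rightarrow> bool" where
  "undirected W \<longleftrightarrow> transpose W = W"

text \<open>Imitation mechanism: Lipschitz map from the simplex into nonnegative A x A matrices.
  f y $ i $ j = f_{ij}(y).\<close>
definition imitation_mechanism :: "(real^'a::finite \<Rightarrow> real^'a^'a) \<Rightarrow> bool" where
  "imitation_mechanism f \<longleftrightarrow>
     (\<exists>L. L-lipschitz_on pop_simplex f) \<and> (\<forall>y\<in>pop_simplex. \<forall>i j. 0 \<le> f y $ i $ j)"

definition assumption1 :: "('a::finite \<Rightarrow> real^'a \<Rightarrow> real) \<Rightarrow> (real^'a \<Rightarrow> real^'a^'a) \<Rightarrow> bool" where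
  "assumption1 r f \<longleftrightarrow>
     (\<forall>y\<in>pop_simplex. \<forall>i j. sgn (f y $ i $ j - f y $ j $ i) = sgn (r j y - r i y))"

definition Y_bullet :: "('a::finite \<Rightarrow> real^'a \<Rightarrow> real) \<Rightarrow> (real^'a) set" where
  "Y_bullet r = {y \<in> pop_simplex. \<forall>i j. 0 < y $ i \<and> 0 < y $ j \<longrightarrow> r i y = r j y}"

definition X_bullet :: "('a::finite \<Rightarrow> real^'a \<Rightarrow> real) \<Rightarrow> real^'h::finite \<Rightarrow> (real^'h^'a) set" where
  "X_bullet r eta = {x \<in> sys_states eta. aggr x \<in> Y_bullet r}"

definition net_imitation_field ::
  "real^'h::finite^'h \<Rightarrow> (real^'a::finite \<Rightarrow> real^'a^'a) \<Rightarrow> real^'h^'a \<Rightarrow> real^'h^'a" where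
  "net_imitation_field W f x = (\<chi> i h. \<Sum>j\<in>UNIV. \<Sum>k\<in>UNIV.
      x $ j $ h * W $ h $ k * x $ i $ k * f (aggr x) $ j $ i
    - x $ i $ h * W $ h $ k * x $ j $ k * f (aggr x) $ i $ j)"

end

theory Submission
  imports Defs
begin

text \<open>The aggregate velocity of action i is a sum over pairs (i,j) of the net imitation flux
  (f_ji - f_ij) times the interaction mass of i and j; for undirected W the two directions of
  that mass coincide. Starting from a rest point y0 of X-bullet, Assumption 1 makes f(y0)
  symmetric on the support of y0, so by Lipschitz continuity each flux is O(|y - y0|) when both
  actions are supported at y0, while the mass is O(|y - y0|) otherwise. Hence the aggregate
  velocity is bounded by C |y - y0|, and a Gronwall argument shows that y never leaves y0.\<close>

lemma aggr_bounded_linear: "bounded_linear (aggr :: real^'h::finite^'a::finite \<Rightarrow> real^'a)"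
proof -
  have "linear (aggr :: real^'h::finite^'a::finite \<Rightarrow> real^'a)"
    by (rule linearI) (simp_all add: aggr_def vec_eq_iff sum.distrib sum_distrib_left)
  then show ?thesis using linear_conv_bounded_linear by blast
qed

lemma aggr_mem_pop_simplex:
  assumes "(\<Sum>h\<in>UNIV. eta $ h) = 1" and "z \<in> sys_states eta"
  shows "aggr z \<in> pop_simplex"
proof -
  have "(\<Sum>i\<in>UNIV. \<Sum>h\<in>UNIV. z$i$h) = (\<Sum>h\<in>UNIV. \<Sum>i\<in>UNIV. z$i$h)" by (rule sum.swap)
  also have "\<dots> = 1" using assms by (simp add: sys_states_def)
  finally show ?thesis
    using assms(2) by (auto simp: pop_simplex_def aggr_def sys_states_def intro!: sum_nonneg)
qed

lemma norm_le_one_if_pop_simplex: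
  assumes "y \<in> pop_simplex"
  shows "norm y \<le> 1"
  using norm_le_l1_cart[of y] assms by (simp add: pop_simplex_def)

lemma abs_matrix_entry_le_norm: "\<bar>M$a$b\<bar> \<le> norm (M :: real^'n::finite^'m::finite)"
  using component_le_norm_cart[of "M$a" b] Finite_Cartesian_Product.norm_nth_le[of M a] by linarith

lemma imitation_mechanism_entry_bounds:
  assumes "imitation_mechanism f"
  obtains L B where "0 \<le> L"
    and "\<And>u v a b. u \<in> pop_simplex \<Longrightarrow> v \<in> pop_simplex \<Longrightarrow> \<bar>f u$a$b - f v$a$b\<bar> \<le> L * norm (u - v)"
    and "\<And>u a b. u \<in> pop_simplex \<Longrightarrow> \<bar>f u$a$b\<bar> \<le> B"
proof -
  obtain L where "L-lipschitz_on pop_simplex f"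
    using assms by (auto simp: imitation_mechanism_def)
  then have L0: "0 \<le> L"
    and lip: "\<And>u v. u \<in> pop_simplex \<Longrightarrow> v \<in> pop_simplex \<Longrightarrow> norm (f u - f v) \<le> L * norm (u - v)"
    by (auto simp: lipschitz_on_def dist_norm)
  have entry_lip: "\<bar>f u$a$b - f v$a$b\<bar> \<le> L * norm (u - v)"
    if "u \<in> pop_simplex" "v \<in> pop_simplex" for u v a b
    using abs_matrix_entry_le_norm[of "f u - f v" a b] lip[OF that] by simp
  obtain v :: "real^'a" where v: "v \<in> pop_simplex"
  proof
    show "(\<chi> i. if i = undefined then 1 else 0) \<in> pop_simplex"
      by (simp add: pop_simplex_def)
  qed
  have "\<bar>f u$a$b\<bar> \<le> \<bar>f v$a$b\<bar> + 2 * L" if u: "u \<in> pop_simplex" for u a b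
  proof -
    have "norm (u - v) \<le> 2"
      using norm_le_one_if_pop_simplex[OF u] norm_le_one_if_pop_simplex[OF v]
        norm_triangle_ineq4[of u v] by linarith
    then have "L * norm (u - v) \<le> 2 * L" using L0 by (metis mult.commute mult_left_mono)
    then show ?thesis using entry_lip[OF u v, of a b] by linarith
  qed
  then have "\<bar>f u$a$b\<bar> \<le> norm (f v) + 2 * L" if "u \<in> pop_simplex" for u a b
    using abs_matrix_entry_le_norm[of "f v" a b] that by (meson add_right_mono order_trans)
  with L0 entry_lip show ?thesis using that by blast
qed

lemma rest_point_imitation_symmetric:
  assumes "assumption1 r f" and "y0 \<in> Y_bullet r" and "0 < y0$i" and "0 < y0$j"
  shows "f y0$i$j = f y0$j$i"
proof -
  have "r i y0 = r j y0" using assms(2-4) unfolding Y_bullet_def by blast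
  moreover have "sgn (f y0$i$j - f y0$j$i) = sgn (r j y0 - r i y0)"
    using assms(1,2) unfolding assumption1_def Y_bullet_def by blast
  ultimately show ?thesis by (simp add: sgn_eq_0_iff)
qed

lemma aggr_net_imitation_field:
  assumes "undirected W"
  shows "aggr (net_imitation_field W f x) $ i =
    (\<Sum>j\<in>UNIV. (f (aggr x)$j$i - f (aggr x)$i$j) * (\<Sum>h\<in>UNIV. \<Sum>k\<in>UNIV. x$i$h * W$h$k * x$j$k))"
proof -
  let ?F = "f (aggr x)"
  have W_sym: "W$k$h = W$h$k" for h k
    using assms unfolding undirected_def by (metis transpose_def vec_lambda_beta)
  have mass_sym: "(\<Sum>h\<in>UNIV. \<Sum>k\<in>UNIV. x$j$h * W$h$k * x$i$k)
      = (\<Sum>h\<in>UNIV. \<Sum>k\<in>UNIV. x$i$h * W$h$k * x$j$k)" for j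
  proof -
    have "(\<Sum>h\<in>UNIV. \<Sum>k\<in>UNIV. x$j$h * W$h$k * x$i$k) = (\<Sum>k\<in>UNIV. \<Sum>h\<in>UNIV. x$j$h * W$h$k * x$i$k)"
      by (rule sum.swap)
    also have "\<dots> = (\<Sum>k\<in>UNIV. \<Sum>h\<in>UNIV. x$i$k * W$k$h * x$j$h)"
      by (simp add: W_sym mult.commute mult.left_commute)
    finally show ?thesis .
  qed
  have "aggr (net_imitation_field W f x) $ i =
     (\<Sum>h\<in>UNIV. \<Sum>j\<in>UNIV. \<Sum>k\<in>UNIV. x$j$h * W$h$k * x$i$k * ?F$j$i - x$i$h * W$h$k * x$j$k * ?F$i$j)"
    by (simp add: aggr_def net_imitation_field_def)
  also have "\<dots> = (\<Sum>j\<in>UNIV. (\<Sum>h\<in>UNIV. \<Sum>k\<in>UNIV. x$j$h * W$h$k * x$i$k) * ?F$j$i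
      - (\<Sum>h\<in>UNIV. \<Sum>k\<in>UNIV. x$i$h * W$h$k * x$j$k) * ?F$i$j)"
    by (subst sum.swap) (simp add: sum_subtractf sum_distrib_right)
  also have "\<dots> = (\<Sum>j\<in>UNIV. (?F$j$i - ?F$i$j) * (\<Sum>h\<in>UNIV. \<Sum>k\<in>UNIV. x$i$h * W$h$k * x$j$k))"
    unfolding mass_sym by (simp only: left_diff_distrib mult.commute)
  finally show ?thesis .
qed

lemma interaction_mass_le:
  assumes "\<And>h k. 0 \<le> W$h$k" "\<And>h k. W$h$k \<le> Wm" and "\<And>i h. 0 \<le> z$i$h"
  shows "(\<Sum>h\<in>UNIV. \<Sum>k\<in>UNIV. z$i$h * W$h$k * z$j$k) \<le> Wm * (aggr z$i * aggr z$j)"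
proof -
  have "(\<Sum>h\<in>UNIV. \<Sum>k\<in>UNIV. z$i$h * W$h$k * z$j$k) \<le> (\<Sum>h\<in>UNIV. \<Sum>k\<in>UNIV. z$i$h * Wm * z$j$k)"
    by (intro sum_mono mult_right_mono mult_left_mono) (simp_all add: assms)
  also have "\<dots> = (\<Sum>h\<in>UNIV. (Wm * z$i$h) * (\<Sum>k\<in>UNIV. z$j$k))"
    by (simp add: sum_distrib_left mult_ac)
  also have "\<dots> = (\<Sum>h\<in>UNIV. Wm * z$i$h) * (\<Sum>k\<in>UNIV. z$j$k)"
    by (rule sum_distrib_right[symmetric])
  also have "\<dots> = Wm * (aggr z$i * aggr z$j)"
    by (simp add: aggr_def sum_distrib_left[symmetric] mult.assoc)
  finally show ?thesis .
qed

lemma flux_times_mass_le_displacement: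
  fixes y w :: "real^'a::finite" and F G :: "real^'a^'a"
  assumes G_sym: "0 < w$i \<Longrightarrow> 0 < w$j \<Longrightarrow> G$i$j = G$j$i"
    and F_near_G: "\<And>a b. \<bar>F$a$b - G$a$b\<bar> \<le> L * norm (y - w)"
    and F_bounded: "\<And>a b. \<bar>F$a$b\<bar> \<le> B"
    and "\<And>a. 0 \<le> y$a" "\<And>a. y$a \<le> 1" "\<And>a. 0 \<le> w$a" "0 \<le> L"
  shows "\<bar>F$j$i - F$i$j\<bar> * (y$i * y$j) \<le> (2*L + 2*B) * norm (y - w)"
proof -
  let ?d = "norm (y - w)"
  have B0: "0 \<le> B" using F_bounded[of i i] by linarith
  have mass: "0 \<le> y$i * y$j" "y$i * y$j \<le> 1" using assms(4,5) by (simp_all add: mult_le_one)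
  show ?thesis
  proof (cases "0 < w$i \<and> 0 < w$j")
    case True
    then have "\<bar>F$j$i - F$i$j\<bar> \<le> 2*L*?d"
      using G_sym F_near_G[of j i] F_near_G[of i j] by (simp add: abs_le_iff) linarith?
    then have "\<bar>F$j$i - F$i$j\<bar> * (y$i * y$j) \<le> 2*L*?d"
      using mass by (meson abs_ge_zero mult_left_le order_trans)
    moreover have "0 \<le> 2 * B * ?d" using B0 by simp
    ultimately show ?thesis by (simp add: algebra_simps)
  next
    case False
    then obtain a where "a \<in> {i, j}" "w$a = 0" using assms(6) by (metis insertCI less_eq_real_def)
    then have "y$i * y$j \<le> y$a" "y$a \<le> ?d"
      using assms(4,5) component_le_norm_cart[of "y - w" a]
      by (auto simp: mult_left_le_one_le mult_right_le_one_le)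
    moreover have "\<bar>F$j$i - F$i$j\<bar> \<le> 2*B" using F_bounded[of j i] F_bounded[of i j] by linarith
    ultimately have "\<bar>F$j$i - F$i$j\<bar> * (y$i * y$j) \<le> 2*B * ?d"
      using mass by (meson abs_ge_zero mult_mono order_trans)
    moreover have "0 \<le> 2 * L * ?d" using assms(7) by simp
    ultimately show ?thesis by (simp add: algebra_simps)
  qed
qed

lemma aggr_net_imitation_field_le_displacement:
  fixes f :: "real^'a::finite \<Rightarrow> real^'a^'a" and W :: "real^'h::finite^'h"
  assumes net: "community_network eta W" and undir: "undirected W"
    and imit: "imitation_mechanism f" and A1: "assumption1 r f" and y0: "y0 \<in> Y_bullet r"
  obtains C where "\<And>z. z \<in> sys_states eta \<Longrightarrow>
    norm (aggr (net_imitation_field W f z)) \<le> C * norm (aggr z - y0)"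
proof -
  obtain L B where L0: "0 \<le> L"
    and f_lip: "\<And>u v a b. u \<in> pop_simplex \<Longrightarrow> v \<in> pop_simplex \<Longrightarrow> \<bar>f u$a$b - f v$a$b\<bar> \<le> L * norm (u - v)"
    and f_bounded: "\<And>u a b. u \<in> pop_simplex \<Longrightarrow> \<bar>f u$a$b\<bar> \<le> B"
    using imitation_mechanism_entry_bounds[OF imit] by blast
  have W_nonneg: "\<And>h k. 0 \<le> W$h$k" and eta_sum: "(\<Sum>h\<in>UNIV. eta$h) = 1"
    using net by (auto simp: community_network_def)
  define Wm where "Wm = (\<Sum>h\<in>UNIV. \<Sum>k\<in>UNIV. W$h$k)"
  have W_le: "W$h$k \<le> Wm" for h k
  proof -
    have "W$h$k \<le> (\<Sum>k\<in>UNIV. W$h$k)" by (rule member_le_sum) (auto simp: W_nonneg)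
    also have "\<dots> \<le> Wm" unfolding Wm_def
      by (rule member_le_sum) (auto intro!: sum_nonneg simp: W_nonneg)
    finally show ?thesis .
  qed
  have Wm0: "0 \<le> Wm" using W_nonneg W_le by (meson order_trans)
  have y0_simplex: "y0 \<in> pop_simplex" using y0 by (simp add: Y_bullet_def)
  have y0_nonneg: "\<And>a. 0 \<le> y0$a" using y0_simplex by (simp add: pop_simplex_def)
  define K where "K = Wm * (2*L + 2*B)"
  have "norm (aggr (net_imitation_field W f z)) \<le> (CARD('a) * CARD('a) * K) * norm (aggr z - y0)"
    if z: "z \<in> sys_states eta" for z
  proof -
    let ?y = "aggr z"
    have y: "?y \<in> pop_simplex" using aggr_mem_pop_simplex[OF eta_sum z] .
    have y_nonneg: "\<And>a. 0 \<le> ?y$a" using y by (simp add: pop_simplex_def)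
    have y_le: "\<And>a. ?y$a \<le> 1"
      using norm_le_one_if_pop_simplex[OF y] component_le_norm_cart[of ?y] by (meson abs_ge_self order_trans)
    have z_nonneg: "\<And>i h. 0 \<le> z$i$h" using z by (simp add: sys_states_def)
    have term_le: "\<bar>(f ?y$j$i - f ?y$i$j) * (\<Sum>h\<in>UNIV. \<Sum>k\<in>UNIV. z$i$h * W$h$k * z$j$k)\<bar>
        \<le> K * norm (?y - y0)" for i j
    proof -
      let ?P = "\<Sum>h\<in>UNIV. \<Sum>k\<in>UNIV. z$i$h * W$h$k * z$j$k"
      have "0 \<le> ?P" by (intro sum_nonneg) (simp add: z_nonneg W_nonneg)
      then have "\<bar>(f ?y$j$i - f ?y$i$j) * ?P\<bar> \<le> \<bar>f ?y$j$i - f ?y$i$j\<bar> * (Wm * (?y$i * ?y$j))"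
        by (simp add: abs_mult mult_left_mono interaction_mass_le[OF W_nonneg W_le z_nonneg])
      also have "\<dots> = Wm * (\<bar>f ?y$j$i - f ?y$i$j\<bar> * (?y$i * ?y$j))" by (simp add: mult_ac)
      also have "\<dots> \<le> Wm * ((2*L + 2*B) * norm (?y - y0))"
        using flux_times_mass_le_displacement[OF rest_point_imitation_symmetric[OF A1 y0]
            f_lip[OF y y0_simplex] f_bounded[OF y] y_nonneg y_le y0_nonneg L0]
        by (simp add: Wm0 mult_left_mono)
      finally show ?thesis by (simp add: K_def mult.assoc)
    qed
    have comp_le: "\<bar>aggr (net_imitation_field W f z) $ i\<bar> \<le> CARD('a) * (K * norm (?y - y0))" for i
    proof -
      have "\<bar>aggr (net_imitation_field W f z) $ i\<bar>
          \<le> (\<Sum>j\<in>UNIV. \<bar>(f ?y$j$i - f ?y$i$j) * (\<Sum>h\<in>UNIV. \<Sum>k\<in>UNIV. z$i$h * W$h$k * z$j$k)\<bar>)"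
        unfolding aggr_net_imitation_field[OF undir] by (rule sum_abs)
      also have "\<dots> \<le> (\<Sum>j::'a\<in>UNIV. K * norm (?y - y0))" by (intro sum_mono term_le)
      finally show ?thesis by simp
    qed
    have "norm (aggr (net_imitation_field W f z)) \<le> (\<Sum>i\<in>UNIV. \<bar>aggr (net_imitation_field W f z) $ i\<bar>)"
      by (rule norm_le_l1_cart)
    also have "\<dots> \<le> (\<Sum>i::'a\<in>UNIV. CARD('a) * (K * norm (?y - y0)))" by (intro sum_mono comp_le)
    finally show ?thesis by (simp add: mult.assoc)
  qed
  then show ?thesis using that by blast
qed

text \<open>Gronwall's argument: exp(-2Ct) |y(t) - y(0)|^2 is nonincreasing and vanishes at 0.\<close>
lemma stationary_if_velocity_le_displacement:
  fixes y :: "real \<Rightarrow> 'v::real_inner"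
  assumes deriv: "\<And>t. 0 \<le> t \<Longrightarrow> (y has_vector_derivative y' t) (at t within {0..})"
    and bound: "\<And>t. 0 \<le> t \<Longrightarrow> norm (y' t) \<le> C * norm (y t - y 0)"
    and "0 \<le> t"
  shows "y t = y 0"
proof -
  define V where "V s = inner (y s - y 0) (y s - y 0)" for s
  define G where "G s = exp (- 2 * C * s) * V s" for s
  define G' where "G' s = exp (- 2 * C * s) * (2 * inner (y s - y 0) (y' s) - 2 * C * V s)" for s
  have dG: "(G has_real_derivative G' s) (at s within {0..})" if "0 \<le> s" for s
  proof -
    have dy: "((\<lambda>s. y s - y 0) has_vector_derivative y' s) (at s within {0..})"
      using deriv[OF that] by (simp add: has_vector_derivative_diff_const)
    have dV: "(V has_real_derivative 2 * inner (y s - y 0) (y' s)) (at s within {0..})"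
      using bounded_bilinear.has_vector_derivative[OF bounded_bilinear_inner dy dy]
      unfolding V_def by (simp add: has_real_derivative_iff_has_vector_derivative inner_commute)
    have dE: "((\<lambda>s. exp (- 2 * C * s)) has_real_derivative exp (- 2 * C * s) * (- 2 * C)) (at s within {0..})"
      by (auto intro!: derivative_eq_intros)
    show ?thesis unfolding G_def G'_def
      by (rule DERIV_cong[OF DERIV_mult[OF dE dV]]) (simp add: algebra_simps)
  qed
  have G'_nonpos: "G' s \<le> 0" if "0 \<le> s" for s
  proof -
    have "inner (y s - y 0) (y' s) \<le> norm (y s - y 0) * norm (y' s)"
      by (rule norm_cauchy_schwarz)
    also have "\<dots> \<le> norm (y s - y 0) * (C * norm (y s - y 0))"
      using bound[OF that] by (simp add: mult_left_mono)
    also have "\<dots> = C * V s" by (simp add: V_def power2_norm_eq_inner[symmetric] power2_eq_square)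
    finally show ?thesis unfolding G'_def by (simp add: mult_nonneg_nonpos)
  qed
  have "G t \<le> G 0"
  proof (rule DERIV_nonpos_imp_decreasing_open[OF \<open>0 \<le> t\<close>])
    fix s assume s: "0 < s" "s < t"
    have "at s within {0..} = at s" by (rule at_within_interior) (use s in simp)
    then show "\<exists>d. (G has_real_derivative d) (at s) \<and> d \<le> 0"
      using dG[of s] G'_nonpos[of s] s by auto
  next
    have "continuous_on {0..} G"
      by (rule has_derivative_continuous_on, rule has_field_derivative_imp_has_derivative, rule dG) auto
    then show "continuous_on {0..t} G" by (rule continuous_on_subset) auto
  qed
  moreover have "G 0 = 0" by (simp add: G_def V_def)
  moreover have "0 \<le> V t" by (simp add: V_def)
  ultimately have "V t = 0" unfolding G_def by (simp add: mult_le_0_iff)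
  then show ?thesis by (simp add: V_def)
qed

theorem proposition2:
  fixes r :: "'a::finite \<Rightarrow> real^'a \<Rightarrow> real"
    and eta :: "real^'h::finite"
    and W :: "real^'h^'h"
    and f :: "real^'a \<Rightarrow> real^'a^'a"
    and x :: "real \<Rightarrow> real^'h^'a"
  assumes net: "community_network eta W"
    and conn: "irreducible_mat W"
    and undir: "undirected W"
    and imit: "imitation_mechanism f"
    and A1: "assumption1 r f"
    and sol_states: "\<forall>t\<ge>0. x t \<in> sys_states eta"
    and sol_ode: "\<forall>t\<ge>0. (x has_vector_derivative net_imitation_field W f (x t)) (at t within {0..})"
    and init: "x 0 \<in> X_bullet r eta"
  shows "(\<forall>t\<ge>0. aggr (x t) = aggr (x 0)) \<and> (\<forall>t\<ge>0. x t \<in> X_bullet r eta)"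
proof -
  have y0: "aggr (x 0) \<in> Y_bullet r" using init by (simp add: X_bullet_def)
  obtain C where C: "\<And>z. z \<in> sys_states eta \<Longrightarrow>
      norm (aggr (net_imitation_field W f z)) \<le> C * norm (aggr z - aggr (x 0))"
    using aggr_net_imitation_field_le_displacement[OF net undir imit A1 y0] by blast
  have const: "aggr (x t) = aggr (x 0)" if "0 \<le> t" for t
  proof (rule stationary_if_velocity_le_displacement[OF _ _ that])
    fix s :: real assume "0 \<le> s"
    show "((\<lambda>s. aggr (x s)) has_vector_derivative aggr (net_imitation_field W f (x s))) (at s within {0..})"
      using bounded_linear.has_vector_derivative[OF aggr_bounded_linear sol_ode[rule_format, OF \<open>0 \<le> s\<close>]] .
    show "norm (aggr (net_imitation_field W f (x s))) \<le> C * norm (aggr (x s) - aggr (x 0))"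
      using C sol_states \<open>0 \<le> s\<close> by simp
  qed
  moreover have "x t \<in> X_bullet r eta" if "0 \<le> t" for t
    using sol_states y0 const[OF that] that by (simp add: X_bullet_def)
  ultimately show ?thesis by blast
qed

end
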